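(* Let $\mathcal{D}$ be an algebra of bounded real functions with the Stone property containing a strictly positive function $\chi>0$, and let $(L,\mathcal{D})$ be a Lagrangian. (i) If there exists a finite energy dominant measure $m$ for $(L,\mathcal{D})$, then every $\Gamma(f)$, $f\in\mathcal{D}$, is countably additive on $\alpha(\mathcal{S})$. (ii) If $(L,\mathcal{D})$ is energy separable with respect to $\{f_n\}_n\subset\mathcal{D}$ and every $\Gamma(f_n)$ is countably additive on $\alpha(\mathcal{S})$, then $\nu(A):=\sum_{n=1}^\infty2^{-n}\frac{\Gamma(f_n)(A)}{1+\Gamma(f_n)(X)}$, $A\in\alpha(\mathcal{S})$, is a finite energy dominant measure for $(L,\mathcal{D})$.
   Context: Lagrangian: symmetric bilinear map $(f,g)\mapsto L_{f,g}$ into the dual of $(\mathcal{D},\|\cdot\|_{\sup})$, each $L_f:=L_{f,f}$ positive, $L_f-L_{T_1(f)}$ positive, $T_1(x)=\max(x,0)\wedge1$. $\mathcal{S}=\{\{g>0\}:g\in\mathcal{D}\}$, $\alpha(\mathcal{S})$ the generated algebra. $\Gamma(f)(B):=\sup\{L_f(h):h\in\mathcal{D},0\le h\le\mathbf 1_B\}$ for $B\in\mathcal{S}$, $\Gamma(f)(A):=\inf\{\Gamma(f)(B):A\subset B\in\mathcal{S}\}$; on $\alpha(\mathcal{S})$ it is a finite finitely additive measure. A measure is a countably additive set function. For finitely additive $\mu,\nu$ on $\alpha(\mathcal{S})$, $\nu\ll\mu$ means: for each $\varepsilon>0$ there is $\delta>0$ with $\nu(A)<\varepsilon$ whenever $\mu(A)<\delta$.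 A measure $m$ on $\alpha(\mathcal{S})$ is energy dominant if $\Gamma(f)\ll m$ for all $f\in\mathcal{D}$. $(L,\mathcal{D})$ is energy separable if there is a countable $\{f_n\}\subset\mathcal{D}$ with $\Gamma(f)\ll\nu$ for all $f$, $\nu$ as in the claim. *)

theory Defs
  imports "HOL-Analysis.Analysis"
begin

text \<open>Underlying space: the whole type 'a (playing the role of X).\<close>

definition T1 :: "('a \<Rightarrow> real) \<Rightarrow> 'a \<Rightarrow> real" where
  "T1 f = (\<lambda>x. min (max (f x) 0) 1)"

definition stone_algebra :: "('a \<Rightarrow> real) set \<Rightarrow> bool" where
  "stone_algebra D \<longleftrightarrow>
     (\<forall>f\<in>D. bounded (range f)) \<and>
     (\<forall>f\<in>D. \<forall>g\<in>D. (\<lambda>x. f x + g x) \<in> D) \<and>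
     (\<forall>f\<in>D. \<forall>c::real. (\<lambda>x. c * f x) \<in> D) \<and>
     (\<forall>f\<in>D. \<forall>g\<in>D. (\<lambda>x. f x * g x) \<in> D) \<and>
     (\<forall>f\<in>D. \<forall>g\<in>D. (\<lambda>x. max (f x) (g x)) \<in> D \<and> (\<lambda>x. min (f x) (g x)) \<in> D) \<and>
     (\<forall>f\<in>D. (\<lambda>x. min (f x) 1) \<in> D)"

definition sup_norm :: "('a \<Rightarrow> real) \<Rightarrow> real" where
  "sup_norm h = (SUP x. \<bar>h x\<bar>)"

definition lagrangian :: "('a \<Rightarrow> real) set \<Rightarrow>
    (('a \<Rightarrow> real) \<Rightarrow> ('a \<Rightarrow> real) \<Rightarrow> ('a \<Rightarrow> real) \<Rightarrow> real) \<Rightarrow> bool" where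
  "lagrangian D L \<longleftrightarrow>
     (\<forall>f\<in>D. \<forall>g\<in>D. \<forall>h\<in>D. L f g h = L g f h) \<and>
     (\<forall>f1\<in>D. \<forall>f2\<in>D. \<forall>g\<in>D. \<forall>h\<in>D. \<forall>a b::real.
        L (\<lambda>x. a * f1 x + b * f2 x) g h = a * L f1 g h + b * L f2 g h) \<and>
     (\<forall>f\<in>D. \<forall>g\<in>D. \<forall>h1\<in>D. \<forall>h2\<in>D. \<forall>a b::real.
        L f g (\<lambda>x. a * h1 x + b * h2 x) = a * L f g h1 + b * L f g h2) \<and>
     (\<forall>f\<in>D. \<forall>g\<in>D. \<exists>C::real. \<forall>h\<in>D. \<bar>L f g h\<bar> \<le> C * sup_norm h) \<and>
     (\<forall>f\<in>D. \<forall>h\<in>D. (\<forall>x. 0 \<le> h x) \<longrightarrow> 0 \<le> L f f h) \<and>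
     (\<forall>f\<in>D. \<forall>h\<in>D. (\<forall>x. 0 \<le> h x) \<longrightarrow> L (T1 f) (T1 f) h \<le> L f f h)"

definition S_sets :: "('a \<Rightarrow> real) set \<Rightarrow> 'a set set" where
  "S_sets D = {{x. 0 < g x} | g. g \<in> D}"

definition gen_alg :: "('a \<Rightarrow> real) set \<Rightarrow> 'a set set" where
  "gen_alg D = \<Inter>{M. algebra UNIV M \<and> S_sets D \<subseteq> M}"

definition GammaS :: "('a \<Rightarrow> real) set \<Rightarrow>
    (('a \<Rightarrow> real) \<Rightarrow> ('a \<Rightarrow> real) \<Rightarrow> ('a \<Rightarrow> real) \<Rightarrow> real) \<Rightarrow> ('a \<Rightarrow> real) \<Rightarrow> 'a set \<Rightarrow> real" where
  "GammaS D L f B = Sup {L f f h | h. h \<in> D \<and> (\<forall>x. 0 \<le> h x \<and> h x \<le> indicator B x)}"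

definition Gamma :: "('a \<Rightarrow> real) set \<Rightarrow>
    (('a \<Rightarrow> real) \<Rightarrow> ('a \<Rightarrow> real) \<Rightarrow> ('a \<Rightarrow> real) \<Rightarrow> real) \<Rightarrow> ('a \<Rightarrow> real) \<Rightarrow> 'a set \<Rightarrow> real" where
  "Gamma D L f A = Inf {GammaS D L f B | B. B \<in> S_sets D \<and> A \<subseteq> B}"

definition countably_additive_real :: "'a set set \<Rightarrow> ('a set \<Rightarrow> real) \<Rightarrow> bool" where
  "countably_additive_real M \<mu> \<longleftrightarrow>
     (\<forall>A :: nat \<Rightarrow> 'a set. range A \<subseteq> M \<longrightarrow> disjoint_family A \<longrightarrow> (\<Union>(range A)) \<in> M \<longrightarrow>
        (\<lambda>n. \<mu> (A n)) sums \<mu> (\<Union>(range A)))"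

text \<open>A finite measure on M: nonnegative, real-valued (hence finite), countably additive.\<close>
definition finite_measure_on :: "'a set set \<Rightarrow> ('a set \<Rightarrow> real) \<Rightarrow> bool" where
  "finite_measure_on M m \<longleftrightarrow> (\<forall>A\<in>M. 0 \<le> m A) \<and> countably_additive_real M m"

definition abs_cont :: "'a set set \<Rightarrow> ('a set \<Rightarrow> real) \<Rightarrow> ('a set \<Rightarrow> real) \<Rightarrow> bool" where
  "abs_cont M \<nu> \<mu> \<longleftrightarrow>
     (\<forall>\<epsilon>>0. \<exists>\<delta>>0. \<forall>A\<in>M. \<mu> A < \<delta> \<longrightarrow> \<nu> A < \<epsilon>)"

definition energy_dominant :: "('a \<Rightarrow> real) set \<Rightarrow>
    (('a \<Rightarrow> real) \<Rightarrow> ('a \<Rightarrow> real) \<Rightarrow> ('a \<Rightarrow> real) \<Rightarrow> real) \<Rightarrow> ('a set \<Rightarrow> real) \<Rightarrow> bool" where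
  "energy_dominant D L m \<longleftrightarrow>
     finite_measure_on (gen_alg D) m \<and> (\<forall>f\<in>D. abs_cont (gen_alg D) (Gamma D L f) m)"

text \<open>nu(A) = sum_{n>=1} 2^{-n} Gamma(f_n)(A) / (1 + Gamma(f_n)(X)); the sequence is indexed from 0
  here, so term n carries weight 2^{-(n+1)}.\<close>
definition nu_of :: "('a \<Rightarrow> real) set \<Rightarrow>
    (('a \<Rightarrow> real) \<Rightarrow> ('a \<Rightarrow> real) \<Rightarrow> ('a \<Rightarrow> real) \<Rightarrow> real) \<Rightarrow> (nat \<Rightarrow> 'a \<Rightarrow> real) \<Rightarrow> 'a set \<Rightarrow> real" where
  "nu_of D L fs A = (\<Sum>n. (1/2) ^ (Suc n) * (Gamma D L (fs n) A / (1 + Gamma D L (fs n) UNIV)))"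

definition energy_separable_wrt :: "('a \<Rightarrow> real) set \<Rightarrow>
    (('a \<Rightarrow> real) \<Rightarrow> ('a \<Rightarrow> real) \<Rightarrow> ('a \<Rightarrow> real) \<Rightarrow> real) \<Rightarrow> (nat \<Rightarrow> 'a \<Rightarrow> real) \<Rightarrow> bool" where
  "energy_separable_wrt D L fs \<longleftrightarrow>
     range fs \<subseteq> D \<and> (\<forall>f\<in>D. abs_cont (gen_alg D) (Gamma D L f) (nu_of D L fs))"

end

theory Submission imports Defs begin

text \<open>For f \<in> D the set function \<Gamma>(f) is the outer measure generated by its values on S.
  A set B of S splits every E additively: \<ge> holds because the Stone property lets an
  admissible function for U \<inter> B be cut off at a small level and separated from U - B by
  a set of S; \<le> needs subadditivity of \<Gamma>(f) on S, and this is where a finite energy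
  dominant measure m enters, since absolute continuity makes \<Gamma>(f) vanish along decreasing
  sequences with empty intersection. The Caratheodory sets form an algebra, so \<Gamma>(f) is
  additive on \<alpha>(S), and the same continuity upgrades this to countable additivity.
  For (ii), \<nu> is a weighted series of countably additive set functions bounded by 1, which
  is countably additive by Tannery's theorem.\<close>

lemma disjoint_family_decseq_diff:
  assumes "decseq R"
  shows "disjoint_family (\<lambda>n. R n - R (Suc n))"
proof -
  have "disjoint_family (\<lambda>n. - R (Suc n) - - R n)"
    by (rule disjoint_family_Suc) (use assms in \<open>auto simp: decseq_Suc_iff\<close>)
  then show ?thesis by (simp add: Diff_eq Int_commute)
qed

lemma UN_decseq_diff:
  assumes "decseq R" and "(\<Inter>n. R n) = {}"
  shows "(\<Union>n. R n - R (Suc n)) = R 0"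
proof
  show "(\<Union>n. R n - R (Suc n)) \<subseteq> R 0"
    using decseqD[OF assms(1)] by blast
  show "R 0 \<subseteq> (\<Union>n. R n - R (Suc n))"
  proof
    fix x assume "x \<in> R 0"
    show "x \<in> (\<Union>n. R n - R (Suc n))"
    proof (rule ccontr)
      assume "x \<notin> (\<Union>n. R n - R (Suc n))"
      then have "x \<in> R n" for n
        using \<open>x \<in> R 0\<close> by (induction n) auto
      then show False using assms(2) by blast
    qed
  qed
qed

lemma finite_measure_on_decseq_sums:
  assumes M: "algebra UNIV M" and m: "finite_measure_on M m"
    and R: "range R \<subseteq> M" "decseq R" "(\<Inter>n. R n) = {}"
  shows "(\<lambda>n. m (R n - R (Suc n))) sums m (R 0)"
proof -
  interpret algebra UNIV M by (rule M)
  have "(\<lambda>n. m (R n - R (Suc n))) sums m (\<Union>n. R n - R (Suc n))"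
  proof (rule m[unfolded finite_measure_on_def countably_additive_real_def, THEN conjunct2, rule_format])
    show "range (\<lambda>n. R n - R (Suc n)) \<subseteq> M"
      using R(1) by blast
    show "disjoint_family (\<lambda>n. R n - R (Suc n))"
      using R(2) by (rule disjoint_family_decseq_diff)
    show "(\<Union>n. R n - R (Suc n)) \<in> M"
      unfolding UN_decseq_diff[OF R(2,3)] using R(1) by (rule range_subsetD)
  qed
  then show ?thesis
    unfolding UN_decseq_diff[OF R(2,3)] .
qed

lemma finite_measure_on_decseq_tendsto_0:
  assumes M: "algebra UNIV M" and m: "finite_measure_on M m"
    and R: "range R \<subseteq> M" "decseq R" "(\<Inter>n. R n) = {}"
  shows "(\<lambda>n. m (R n)) \<longlonglongrightarrow> 0"
proof -
  define A where "A n = m (R n - R (Suc n))" for n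
  have shifted_sums: "(\<lambda>n. A (n + k)) sums m (R k)" for k
  proof -
    have "R (n + k) \<subseteq> R n" for n
      by (rule decseqD[OF R(2)]) simp
    then have "(\<Inter>n. R (n + k)) = {}"
      using R(3) by blast
    moreover have "decseq (\<lambda>n. R (n + k))"
      using R(2) by (simp add: decseq_Suc_iff)
    moreover have "range (\<lambda>n. R (n + k)) \<subseteq> M"
      using R(1) by blast
    ultimately show ?thesis
      using finite_measure_on_decseq_sums[OF M m, of "\<lambda>n. R (n + k)"] by (simp add: A_def)
  qed
  have "m (R 0) - (\<Sum>i<k. A i) = m (R k)" for k
    using sums_unique2[OF shifted_sums[of 0, simplified]
        sums_iff_shift[where f = A, THEN iffD1, OF shifted_sums[of k]]]
    by simp
  moreover have "(\<lambda>k. m (R 0) - (\<Sum>i<k. A i)) \<longlonglongrightarrow> m (R 0) - m (R 0)"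
    using shifted_sums[of 0] by (intro tendsto_diff tendsto_const) (simp add: sums_def)
  ultimately show ?thesis by simp
qed

lemma countably_additive_realI:
  assumes M: "algebra UNIV M"
    and additive: "\<And>A B. A \<in> M \<Longrightarrow> B \<in> M \<Longrightarrow> A \<inter> B = {} \<Longrightarrow> \<mu> (A \<union> B) = \<mu> A + \<mu> B"
    and continuous: "\<And>R. range R \<subseteq> M \<Longrightarrow> decseq R \<Longrightarrow> (\<Inter>n. R n) = {} \<Longrightarrow>
      (\<lambda>n. \<mu> (R n)) \<longlonglongrightarrow> 0"
  shows "countably_additive_real M \<mu>"
  unfolding countably_additive_real_def
proof (intro allI impI)
  interpret algebra UNIV M by (rule M)
  fix A :: "nat \<Rightarrow> 'a set"
  assume A: "range A \<subseteq> M" "disjoint_family A" "\<Union>(range A) \<in> M"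
  define R where "R N = \<Union>(range A) - (\<Union>i<N. A i)" for N
  have R_M: "R N \<in> M" for N
    using A by (auto simp: R_def intro!: Diff finite_UN)
  have decomposition: "\<mu> (\<Union>(range A)) = (\<Sum>i<N. \<mu> (A i)) + \<mu> (R N)" for N
  proof (induction N)
    case 0 then show ?case by (simp add: R_def)
  next
    case (Suc N)
    have "A N \<inter> A i = {}" if "i < N" for i
      using A(2) that unfolding disjoint_family_on_def by auto
    then have split: "R N = A N \<union> R (Suc N)" and disj: "A N \<inter> R (Suc N) = {}"
      by (auto simp: R_def lessThan_Suc)
    have "\<mu> (R N) = \<mu> (A N) + \<mu> (R (Suc N))"
      unfolding split by (rule additive[OF range_subsetD[OF A(1)] R_M disj])
    then show ?case using Suc by simp
  qed
  have "(\<lambda>N. \<mu> (R N)) \<longlonglongrightarrow> 0"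
  proof (rule continuous)
    show "range R \<subseteq> M" using R_M by auto
    show "decseq R" by (rule decseq_SucI) (auto simp: R_def lessThan_Suc)
    show "(\<Inter>N. R N) = {}" by (auto simp: R_def lessThan_Suc)
  qed
  then have "(\<lambda>N. \<mu> (\<Union>(range A)) - \<mu> (R N)) \<longlonglongrightarrow> \<mu> (\<Union>(range A)) - 0"
    by (intro tendsto_diff tendsto_const)
  moreover have "\<mu> (\<Union>(range A)) - \<mu> (R N) = (\<Sum>i<N. \<mu> (A i))" for N
    using decomposition[of N] by simp
  ultimately show "(\<lambda>n. \<mu> (A n)) sums \<mu> (\<Union>(range A))"
    unfolding sums_def by simp
qed

lemma abs_cont_tendsto_0:
  assumes "abs_cont M \<nu> \<mu>" and "range R \<subseteq> M" and "(\<lambda>n. \<mu> (R n)) \<longlonglongrightarrow> 0"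
    and "\<And>n. 0 \<le> \<nu> (R n)"
  shows "(\<lambda>n. \<nu> (R n)) \<longlonglongrightarrow> 0"
proof (rule order_tendstoI)
  fix a :: real assume "a < 0"
  have "a < \<nu> (R n)" for n
    using \<open>a < 0\<close> assms(4)[of n] by linarith
  then show "\<forall>\<^sub>F n in sequentially. a < \<nu> (R n)"
    by (simp add: always_eventually)
next
  fix a :: real assume "0 < a"
  then obtain \<delta> where "0 < \<delta>" and \<delta>: "\<And>A. A \<in> M \<Longrightarrow> \<mu> A < \<delta> \<Longrightarrow> \<nu> A < a"
    using assms(1) unfolding abs_cont_def by blast
  have "\<forall>\<^sub>F n in sequentially. \<mu> (R n) < \<delta>"
    using assms(3) \<open>0 < \<delta>\<close> by (rule order_tendstoD)
  then show "\<forall>\<^sub>F n in sequentially. \<nu> (R n) < a"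
    by (rule eventually_mono) (rule \<delta>[OF range_subsetD[OF assms(2)]])
qed

lemma countably_additive_real_divide:
  assumes "countably_additive_real M \<mu>"
  shows "countably_additive_real M (\<lambda>A. \<mu> A / c)"
  unfolding countably_additive_real_def
proof (intro allI impI)
  fix A :: "nat \<Rightarrow> 'a set"
  assume "range A \<subseteq> M" "disjoint_family A" "\<Union>(range A) \<in> M"
  then have "(\<lambda>n. \<mu> (A n)) sums \<mu> (\<Union>(range A))"
    using assms unfolding countably_additive_real_def by blast
  then show "(\<lambda>n. \<mu> (A n) / c) sums (\<mu> (\<Union>(range A)) / c)"
    by (rule sums_divide)
qed

lemma summable_weighted:
  fixes w c :: "nat \<Rightarrow> real"
  assumes "summable w" "\<And>n. 0 \<le> w n" "\<And>n. 0 \<le> c n" "\<And>n. c n \<le> 1"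
  shows "summable (\<lambda>n. w n * c n)"
proof (rule summable_comparison_test'[OF assms(1)])
  show "norm (w n * c n) \<le> w n" for n
    using mult_left_le[OF assms(4) assms(2)] assms(2,3)[of n] by (simp add: abs_mult)
qed

lemma countably_additive_real_suminf:
  assumes ca: "\<And>n. countably_additive_real M (\<mu> n)"
    and \<mu>_nonneg: "\<And>n A. A \<in> M \<Longrightarrow> 0 \<le> \<mu> n A"
    and \<mu>_le_1: "\<And>n A. A \<in> M \<Longrightarrow> \<mu> n A \<le> 1"
    and w: "summable w" "\<And>n. 0 \<le> w n"
  shows "countably_additive_real M (\<lambda>A. \<Sum>n. w n * \<mu> n A)"
  unfolding countably_additive_real_def
proof (intro allI impI)
  fix A :: "nat \<Rightarrow> 'a set"
  assume A: "range A \<subseteq> M" "disjoint_family A" and U: "\<Union>(range A) \<in> M"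
  have sums: "(\<lambda>k. \<mu> n (A k)) sums \<mu> n (\<Union>(range A))" for n
    using ca A U unfolding countably_additive_real_def by blast
  define a where "a n K = w n * (\<Sum>k<K. \<mu> n (A k))" for n K
  have "norm (a n K) \<le> w n" for n K
  proof -
    have "(\<Sum>k<K. \<mu> n (A k)) \<le> (\<Sum>k. \<mu> n (A k))"
      by (rule sum_le_suminf[OF sums_summable[OF sums[of n]]])
        (simp_all add: \<mu>_nonneg range_subsetD[OF A(1)])
    then have "(\<Sum>k<K. \<mu> n (A k)) \<le> 1"
      using \<mu>_le_1[OF U, of n] sums_unique[OF sums[of n]] by linarith
    moreover have "0 \<le> (\<Sum>k<K. \<mu> n (A k))"
      by (simp add: \<mu>_nonneg range_subsetD[OF A(1)] sum_nonneg)
    ultimately show ?thesis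
      unfolding a_def using mult_left_le[of _ "w n"] w(2)[of n] by (simp add: abs_mult)
  qed
  then have bound: "\<forall>\<^sub>F (n, K) in sequentially \<times>\<^sub>F sequentially. norm (a n K) \<le> w n"
    by (simp add: always_eventually)
  have limit: "(\<lambda>K. a n K) \<longlonglongrightarrow> w n * \<mu> n (\<Union>(range A))" for n
    using sums[of n] unfolding a_def sums_def by (rule tendsto_mult_left)
  have "(\<lambda>K. \<Sum>n. a n K) \<longlonglongrightarrow> (\<Sum>n. w n * \<mu> n (\<Union>(range A)))"
    by (rule tannerys_theorem[OF limit bound w(1) sequentially_bot, THEN conjunct2, THEN conjunct2])
  moreover have "(\<Sum>n. a n K) = (\<Sum>k<K. \<Sum>n. w n * \<mu> n (A k))" for K
    unfolding a_def sum_distrib_left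
    by (rule suminf_sum)
      (simp add: summable_weighted w \<mu>_nonneg \<mu>_le_1 range_subsetD[OF A(1)])
  ultimately show "(\<lambda>k. \<Sum>n. w n * \<mu> n (A k)) sums (\<Sum>n. w n * \<mu> n (\<Union>(range A)))"
    unfolding sums_def by simp
qed

lemma finite_measure_on_suminf:
  assumes ca: "\<And>n. countably_additive_real M (\<mu> n)"
    and \<mu>_nonneg: "\<And>n A. A \<in> M \<Longrightarrow> 0 \<le> \<mu> n A"
    and \<mu>_le_1: "\<And>n A. A \<in> M \<Longrightarrow> \<mu> n A \<le> 1"
    and w: "summable w" "\<And>n. 0 \<le> w n"
  shows "finite_measure_on M (\<lambda>A. \<Sum>n. w n * \<mu> n A)"
proof -
  have "0 \<le> (\<Sum>n. w n * \<mu> n A)" if "A \<in> M" for A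
    using summable_weighted[OF w] \<mu>_nonneg[OF that] \<mu>_le_1[OF that] w(2)
    by (simp add: suminf_nonneg)
  moreover have "countably_additive_real M (\<lambda>A. \<Sum>n. w n * \<mu> n A)"
    by (rule countably_additive_real_suminf[where \<mu> = \<mu>, OF ca \<mu>_nonneg \<mu>_le_1 w])
  ultimately show ?thesis
    unfolding finite_measure_on_def by blast
qed

lemma algebra_splitting_sets:
  fixes \<mu> :: "'a set \<Rightarrow> real"
  assumes "\<mu> {} = 0" and "\<And>A. 0 \<le> \<mu> A"
  shows "algebra UNIV {B. \<forall>E. \<mu> (E \<inter> B) + \<mu> (E - B) = \<mu> E}"
proof -
  interpret Pow: algebra UNIV "Pow UNIV" by (rule algebra_Pow)
  have "ennreal (\<mu> (E \<inter> B)) + ennreal (\<mu> (E - B)) = ennreal (\<mu> E) \<longleftrightarrow>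
      \<mu> (E \<inter> B) + \<mu> (E - B) = \<mu> E" for E B
    using assms(2) by (simp add: ennreal_plus[symmetric] del: ennreal_plus)
  then have eq: "{B. \<forall>E. \<mu> (E \<inter> B) + \<mu> (E - B) = \<mu> E}
      = lambda_system UNIV (Pow UNIV) (\<lambda>A. ennreal (\<mu> A))"
    unfolding Pow.lambda_system_eq by auto
  have "positive (Pow UNIV) (\<lambda>A. ennreal (\<mu> A))"
    using assms(1) by (simp add: positive_def)
  then show ?thesis
    unfolding eq by (rule Pow.lambda_system_algebra)
qed

lemma decseq_superlevel_sets:
  fixes h s :: "'a \<Rightarrow> real"
  assumes "\<And>x. 0 \<le> s x"
  shows "decseq (\<lambda>n. {x. real n * s x < h x})"
proof (rule decseq_SucI, safe)
  fix n x assume "real (Suc n) * s x < h x"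
  moreover have "real n * s x \<le> real (Suc n) * s x"
    using assms[of x] by (simp add: mult_right_mono)
  ultimately show "real n * s x < h x" by linarith
qed

lemma Inter_superlevel_sets_empty:
  fixes h s :: "'a \<Rightarrow> real"
  assumes "\<And>x. 0 < h x \<Longrightarrow> 0 < s x"
  shows "(\<Inter>n. {x. real n * s x < h x}) = {}"
proof (intro equals0I)
  fix x assume x: "x \<in> (\<Inter>n. {x. real n * s x < h x})"
  then have "real 0 * s x < h x" by blast
  then obtain n where "h x < real n * s x"
    using ex_less_of_nat_mult[OF assms] by auto
  moreover have "real n * s x < h x" using x by blast
  ultimately show False by simp
qed

locale stone_lagrangian =
  fixes D :: "('a \<Rightarrow> real) set"
    and L :: "('a \<Rightarrow> real) \<Rightarrow> ('a \<Rightarrow> real) \<Rightarrow> ('a \<Rightarrow> real) \<Rightarrow> real"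
    and chi :: "'a \<Rightarrow> real"
  assumes stone: "stone_algebra D"
    and chi_in_D: "chi \<in> D" and chi_pos: "\<forall>x. 0 < chi x"
    and lagrangian: "lagrangian D L"
begin

lemma D_add: "h1 \<in> D \<Longrightarrow> h2 \<in> D \<Longrightarrow> (\<lambda>x. h1 x + h2 x) \<in> D"
  and D_scale: "h \<in> D \<Longrightarrow> (\<lambda>x. c * h x) \<in> D"
  and D_max: "h1 \<in> D \<Longrightarrow> h2 \<in> D \<Longrightarrow> (\<lambda>x. max (h1 x) (h2 x)) \<in> D"
  and D_min: "h1 \<in> D \<Longrightarrow> h2 \<in> D \<Longrightarrow> (\<lambda>x. min (h1 x) (h2 x)) \<in> D"
  and D_min_1: "h \<in> D \<Longrightarrow> (\<lambda>x. min (h x) 1) \<in> D"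
  using stone unfolding stone_algebra_def by blast+

lemma D_bounded:
  assumes "h \<in> D"
  obtains M where "\<And>x. \<bar>h x\<bar> \<le> M"
proof -
  have "bounded (range h)" using stone assms unfolding stone_algebra_def by blast
  then obtain M where "\<forall>y\<in>range h. norm y \<le> M" by (auto simp: bounded_iff)
  then have "\<bar>h x\<bar> \<le> M" for x by simp
  then show ?thesis by (rule that)
qed

lemma D_zero: "(\<lambda>x. 0) \<in> D"
  using D_scale[OF chi_in_D, of 0] by simp

lemma D_diff: "h1 \<in> D \<Longrightarrow> h2 \<in> D \<Longrightarrow> (\<lambda>x. h1 x - h2 x) \<in> D"
  using D_add[OF _ D_scale, of h1 h2 "-1"] by simp

lemma D_min_const:
  assumes "h \<in> D" and "0 < t"
  shows "(\<lambda>x. min (h x) t) \<in> D"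
proof -
  have "(\<lambda>x. t * min ((1/t) * h x) 1) \<in> D"
    using assms(1) by (intro D_scale D_min_1)
  moreover have "t * min ((1/t) * h x) 1 = min (h x) t" for x
    using assms(2) by (simp add: min_mult_distrib_left)
  ultimately show ?thesis by simp
qed

lemma S_setsI: "g \<in> D \<Longrightarrow> {x. 0 < g x} \<in> S_sets D"
  unfolding S_sets_def by blast

lemma S_setsE:
  assumes "A \<in> S_sets D"
  obtains g where "g \<in> D" "\<And>x. 0 \<le> g x" "A = {x. 0 < g x}"
proof -
  obtain g where "g \<in> D" "A = {x. 0 < g x}"
    using assms unfolding S_sets_def by blast
  then show ?thesis
    by (intro that[of "\<lambda>x. max (g x) 0"]) (auto intro: D_max[OF _ D_zero])
qed

lemma S_sets_UNIV: "UNIV \<in> S_sets D"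
  using S_setsI[OF chi_in_D] chi_pos by simp

lemma S_sets_empty: "{} \<in> S_sets D"
  using S_setsI[OF D_zero] by simp

lemma S_sets_Int:
  assumes "A \<in> S_sets D" "B \<in> S_sets D"
  shows "A \<inter> B \<in> S_sets D"
proof -
  obtain g g' where "g \<in> D" "A = {x. 0 < g x}" "g' \<in> D" "B = {x. 0 < g' x}"
    using assms unfolding S_sets_def by blast
  moreover have "{x. 0 < g x} \<inter> {x. 0 < g' x} = {x. 0 < min (g x) (g' x)}" by auto
  ultimately show ?thesis using S_setsI[OF D_min] by simp
qed

lemma S_sets_Un:
  assumes "A \<in> S_sets D" "B \<in> S_sets D"
  shows "A \<union> B \<in> S_sets D"
proof -
  obtain g g' where "g \<in> D" "A = {x. 0 < g x}" "g' \<in> D" "B = {x. 0 < g' x}"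
    using assms unfolding S_sets_def by blast
  moreover have "{x. 0 < g x} \<union> {x. 0 < g' x} = {x. 0 < max (g x) (g' x)}" by auto
  ultimately show ?thesis using S_setsI[OF D_max] by simp
qed

lemma S_sets_less: "c \<in> D \<Longrightarrow> h \<in> D \<Longrightarrow> {x. c x < h x} \<in> S_sets D"
  using S_setsI[OF D_diff, of h c] by simp

lemma gen_alg_algebra: "algebra UNIV (gen_alg D)"
  unfolding algebra_iff_Un gen_alg_def by auto

lemma S_sets_subset_gen_alg: "S_sets D \<subseteq> gen_alg D"
  unfolding gen_alg_def by auto

lemma gen_alg_minimal: "algebra UNIV M \<Longrightarrow> S_sets D \<subseteq> M \<Longrightarrow> gen_alg D \<subseteq> M"
  unfolding gen_alg_def by auto

lemma L_linear:
  "f \<in> D \<Longrightarrow> h1 \<in> D \<Longrightarrow> h2 \<in> D \<Longrightarrow>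
    L f f (\<lambda>x. a * h1 x + b * h2 x) = a * L f f h1 + b * L f f h2"
  and L_nonneg: "f \<in> D \<Longrightarrow> h \<in> D \<Longrightarrow> (\<forall>x. 0 \<le> h x) \<Longrightarrow> 0 \<le> L f f h"
  using lagrangian unfolding lagrangian_def by blast+

lemma L_add: "f \<in> D \<Longrightarrow> h1 \<in> D \<Longrightarrow> h2 \<in> D \<Longrightarrow>
    L f f (\<lambda>x. h1 x + h2 x) = L f f h1 + L f f h2"
  using L_linear[of f h1 h2 1 1] by simp

lemma L_diff: "f \<in> D \<Longrightarrow> h1 \<in> D \<Longrightarrow> h2 \<in> D \<Longrightarrow>
    L f f (\<lambda>x. h1 x - h2 x) = L f f h1 - L f f h2"
  using L_linear[of f h1 h2 1 "-1"] by simp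

lemma L_mono:
  assumes "f \<in> D" "h1 \<in> D" "h2 \<in> D" "\<And>x. h1 x \<le> h2 x"
  shows "L f f h1 \<le> L f f h2"
  using L_nonneg[OF assms(1) D_diff[OF assms(3,2)]] L_diff[OF assms(1,3,2)] assms(4) by simp

lemma L_zero: "f \<in> D \<Longrightarrow> L f f (\<lambda>x. 0) = 0"
  using L_linear[OF _ chi_in_D chi_in_D, of f 0 0] by simp

lemma L_bounded:
  assumes "f \<in> D"
  shows "\<exists>K\<ge>0. \<forall>h\<in>D. \<forall>t. (\<forall>x. \<bar>h x\<bar> \<le> t) \<longrightarrow> L f f h \<le> K * t"
proof -
  have "\<forall>f\<in>D. \<forall>g\<in>D. \<exists>C. \<forall>h\<in>D. \<bar>L f g h\<bar> \<le> C * sup_norm h"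
    using lagrangian unfolding lagrangian_def by blast
  then obtain C where C: "\<forall>h\<in>D. \<bar>L f f h\<bar> \<le> C * sup_norm h"
    using assms by blast
  have "L f f h \<le> max C 0 * t" if h: "h \<in> D" "\<And>x. \<bar>h x\<bar> \<le> t" for h t
  proof -
    have bdd: "bdd_above (range (\<lambda>x. \<bar>h x\<bar>))"
      by (rule bdd_aboveI2) (rule h(2))
    have s0: "0 \<le> sup_norm h"
      unfolding sup_norm_def using cSUP_upper[OF UNIV_I bdd] by (meson abs_ge_zero order_trans)
    have st: "sup_norm h \<le> t"
      unfolding sup_norm_def using h(2) by (intro cSUP_least) auto
    have "L f f h \<le> C * sup_norm h" using C h(1) by force
    also have "\<dots> \<le> max C 0 * sup_norm h" using s0 by (simp add: mult_right_mono)
    also have "\<dots> \<le> max C 0 * t" using st by (simp add: mult_left_mono)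
    finally show ?thesis .
  qed
  then show ?thesis by (intro exI[of _ "max C 0"]) auto
qed

definition admissible :: "'a set \<Rightarrow> ('a \<Rightarrow> real) \<Rightarrow> bool" where
  "admissible B h \<longleftrightarrow> h \<in> D \<and> (\<forall>x. 0 \<le> h x \<and> h x \<le> indicator B x)"

lemma admissible_zero: "admissible B (\<lambda>x. 0)"
  using D_zero unfolding admissible_def by simp

lemma admissible_mono:
  assumes "admissible B h" and "B \<subseteq> B'"
  shows "admissible B' h"
proof -
  have "indicator B x \<le> (indicator B' x :: real)" for x
    using assms(2) by (auto simp: indicator_def)
  then show ?thesis using assms(1) unfolding admissible_def by (meson order_trans)
qed

lemma admissible_le_1: "admissible B h \<Longrightarrow> h x \<le> 1"
  unfolding admissible_def by (meson indicator_le_1 order_trans)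

lemma admissible_support:
  assumes "admissible B h" and "0 < h x"
  shows "x \<in> B"
proof (rule ccontr)
  assume "x \<notin> B"
  moreover have "h x \<le> indicator B x"
    using assms(1) unfolding admissible_def by blast
  ultimately show False using assms(2) by simp
qed

lemma admissible_remainder:
  assumes "h \<in> D" "c \<in> D" "\<And>x. 0 \<le> h x" "\<And>x. h x \<le> 1" "\<And>x. 0 \<le> c x"
  shows "admissible {x. c x < h x} (\<lambda>x. h x - min (h x) (c x))"
proof -
  have "0 \<le> h x - min (h x) (c x) \<and> h x - min (h x) (c x) \<le> indicator {x. c x < h x} x" for x
    using assms(4)[of x] assms(5)[of x] by (auto simp: indicator_def min_def)
  then show ?thesis
    using D_diff[OF assms(1) D_min[OF assms(1,2)]] unfolding admissible_def by blast
qed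

lemma admissible_min:
  assumes "h \<in> D" "g \<in> D" "\<And>x. 0 \<le> h x" "\<And>x. h x \<le> 1" "\<And>x. 0 \<le> g x" "0 \<le> c"
  shows "admissible {x. 0 < g x} (\<lambda>x. min (h x) (c * g x))"
proof -
  have "0 \<le> min (h x) (c * g x) \<and> min (h x) (c * g x) \<le> indicator {x. 0 < g x} x" for x
  proof (cases "0 < g x")
    case True
    then show ?thesis
      using assms(3)[of x] assms(4)[of x] assms(6) by (simp add: indicator_def)
  next
    case False
    then have "g x = 0" using assms(5)[of x] by simp
    then show ?thesis using assms(3)[of x] by simp
  qed
  then show ?thesis
    using D_min[OF assms(1) D_scale[OF assms(2)]] unfolding admissible_def by blast
qed

text \<open>The separating set is {k h < g} for U = {0 < g} and k t > sup g.\<close>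
lemma S_sets_separating:
  assumes U: "U \<in> S_sets D" and h: "admissible (U \<inter> B) h" and "0 < t"
  obtains V where "V \<in> S_sets D" "V \<subseteq> U" "U - B \<subseteq> V" "V \<inter> {x. t < h x} = {}"
proof -
  obtain g where g: "g \<in> D" "\<And>x. 0 \<le> g x" "U = {x. 0 < g x}"
    using S_setsE[OF U] by blast
  obtain M where M: "\<And>x. \<bar>g x\<bar> \<le> M" using D_bounded[OF g(1)] by blast
  define k where "k = M / t + 1"
  have "0 \<le> M / t" using M[of undefined] \<open>0 < t\<close> by simp
  then have "0 < k" by (simp add: k_def)
  have kt: "k * t = M + t" using \<open>0 < t\<close> by (simp add: k_def field_simps)
  have h0: "0 \<le> h x" and h_le: "h x \<le> indicator (U \<inter> B) x" for x
    using h unfolding admissible_def by auto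
  have h_B: "h x = 0" if "x \<notin> U \<inter> B" for x
    using h0[of x] h_le[of x] that by simp
  define V where "V = {x. 0 < g x - k * h x}"
  show ?thesis
  proof (rule that[of V])
    have "h \<in> D" using h unfolding admissible_def by blast
    then show "V \<in> S_sets D"
      unfolding V_def by (rule S_setsI[OF D_diff[OF g(1) D_scale]])
    show "V \<subseteq> U"
    proof
      fix x assume "x \<in> V"
      moreover have "0 \<le> k * h x" using \<open>0 < k\<close> h0[of x] by simp
      ultimately show "x \<in> U" using g(3) by (simp add: V_def)
    qed
    show "U - B \<subseteq> V"
      using g(3) h_B by (auto simp: V_def)
    show "V \<inter> {x. t < h x} = {}"
    proof (intro equals0I)
      fix x assume "x \<in> V \<inter> {x. t < h x}"
      then have "k * t < k * h x" "k * h x < g x"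
        using \<open>0 < k\<close> by (auto simp: V_def)
      then show False using M[of x] kt \<open>0 < t\<close> by linarith
    qed
  qed
qed

context
  fixes f assumes f_in_D: "f \<in> D"
begin

lemma GammaS_eq_Sup: "GammaS D L f B = Sup {L f f h | h. admissible B h}"
  unfolding GammaS_def admissible_def by simp

lemma GammaS_bdd_above: "bdd_above {L f f h | h. admissible B h}"
proof -
  obtain K where K: "\<forall>h\<in>D. \<forall>t. (\<forall>x. \<bar>h x\<bar> \<le> t) \<longrightarrow> L f f h \<le> K * t"
    using L_bounded[OF f_in_D] by blast
  have "L f f h \<le> K" if "admissible B h" for h
  proof -
    have "h \<in> D" and "\<forall>x. \<bar>h x\<bar> \<le> 1"
      using that admissible_le_1[OF that] unfolding admissible_def by simp_all
    then show ?thesis using K[THEN bspec, THEN spec, THEN mp, of h 1] by simp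
  qed
  then show ?thesis unfolding bdd_above_def by blast
qed

lemma GammaS_upper: "admissible B h \<Longrightarrow> L f f h \<le> GammaS D L f B"
  unfolding GammaS_eq_Sup by (rule cSup_upper[OF _ GammaS_bdd_above]) blast

lemma GammaS_least:
  assumes "\<And>h. admissible B h \<Longrightarrow> L f f h \<le> c"
  shows "GammaS D L f B \<le> c"
  unfolding GammaS_eq_Sup
proof (rule cSup_least)
  show "{L f f h | h. admissible B h} \<noteq> {}"
    using admissible_zero by blast
  fix y assume "y \<in> {L f f h | h. admissible B h}"
  then show "y \<le> c" using assms by blast
qed

lemma GammaS_approx:
  assumes "0 < e"
  shows "\<exists>h. admissible B h \<and> GammaS D L f B - e < L f f h"
proof -
  have ne: "{L f f h | h. admissible B h} \<noteq> {}"
    using admissible_zero by blast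
  have "GammaS D L f B - e < Sup {L f f h | h. admissible B h}"
    unfolding GammaS_eq_Sup using assms by simp
  from less_cSupD[OF ne this]
  obtain y where "y \<in> {L f f h | h. admissible B h}" "GammaS D L f B - e < y"
    by blast
  then obtain h where "admissible B h" "GammaS D L f B - e < L f f h"
    by blast
  then show ?thesis by blast
qed

lemma GammaS_nonneg: "0 \<le> GammaS D L f B"
  using GammaS_upper[OF admissible_zero] L_zero[OF f_in_D] by simp

lemma GammaS_mono:
  assumes "B \<subseteq> B'"
  shows "GammaS D L f B \<le> GammaS D L f B'"
proof (rule GammaS_least)
  fix h assume "admissible B h"
  then show "L f f h \<le> GammaS D L f B'"
    by (rule GammaS_upper[OF admissible_mono[OF _ assms]])
qed

lemma GammaS_superadditive:
  assumes "V \<inter> W = {}"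
  shows "GammaS D L f V + GammaS D L f W \<le> GammaS D L f (V \<union> W)"
proof -
  have sum_le: "L f f h + L f f h' \<le> GammaS D L f (V \<union> W)"
    if h: "admissible V h" and h': "admissible W h'" for h h'
  proof -
    have hD: "h \<in> D" and h'D: "h' \<in> D"
      using h h' unfolding admissible_def by blast+
    have "0 \<le> h x + h' x \<and> h x + h' x \<le> indicator (V \<union> W) x" for x
    proof -
      have "0 \<le> h x" "h x \<le> indicator V x" "0 \<le> h' x" "h' x \<le> indicator W x"
        using h h' unfolding admissible_def by blast+
      then show ?thesis
        using assms by (cases "x \<in> V"; cases "x \<in> W") (auto simp: indicator_def)
    qed
    then have "admissible (V \<union> W) (\<lambda>x. h x + h' x)"
      using D_add[OF hD h'D] unfolding admissible_def by blast
    then have "L f f (\<lambda>x. h x + h' x) \<le> GammaS D L f (V \<union> W)"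
      by (rule GammaS_upper)
    then show ?thesis
      using L_add[OF f_in_D hD h'D] by simp
  qed
  have V_bound: "GammaS D L f V \<le> GammaS D L f (V \<union> W) - L f f h'" if h': "admissible W h'" for h'
  proof (rule GammaS_least)
    fix h assume "admissible V h"
    then show "L f f h \<le> GammaS D L f (V \<union> W) - L f f h'"
      using sum_le[OF \<open>admissible V h\<close> h'] by linarith
  qed
  have "GammaS D L f W \<le> GammaS D L f (V \<union> W) - GammaS D L f V"
  proof (rule GammaS_least)
    fix h' assume "admissible W h'"
    then show "L f f h' \<le> GammaS D L f (V \<union> W) - GammaS D L f V"
      using V_bound[OF \<open>admissible W h'\<close>] by linarith
  qed
  then show ?thesis by simp
qed

lemma Gamma_le_GammaS: "B \<in> S_sets D \<Longrightarrow> A \<subseteq> B \<Longrightarrow> Gamma D L f A \<le> GammaS D L f B"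
proof -
  assume "B \<in> S_sets D" "A \<subseteq> B"
  then have "GammaS D L f B \<in> {GammaS D L f B | B. B \<in> S_sets D \<and> A \<subseteq> B}"
    by blast
  moreover have "bdd_below {GammaS D L f B | B. B \<in> S_sets D \<and> A \<subseteq> B}"
    unfolding bdd_below_def using GammaS_nonneg by blast
  ultimately show ?thesis
    unfolding Gamma_def by (rule cInf_lower)
qed

lemma Gamma_greatest:
  assumes "\<And>B. B \<in> S_sets D \<Longrightarrow> A \<subseteq> B \<Longrightarrow> c \<le> GammaS D L f B"
  shows "c \<le> Gamma D L f A"
  unfolding Gamma_def
proof (rule cInf_greatest)
  show "{GammaS D L f B | B. B \<in> S_sets D \<and> A \<subseteq> B} \<noteq> {}"
    using S_sets_UNIV by blast
  fix y assume "y \<in> {GammaS D L f B | B. B \<in> S_sets D \<and> A \<subseteq> B}"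
  then show "c \<le> y" using assms by blast
qed

lemma Gamma_approx:
  assumes "0 < e"
  shows "\<exists>B. B \<in> S_sets D \<and> A \<subseteq> B \<and> GammaS D L f B < Gamma D L f A + e"
proof -
  have ne: "{GammaS D L f B | B. B \<in> S_sets D \<and> A \<subseteq> B} \<noteq> {}"
    using S_sets_UNIV by blast
  have "Inf {GammaS D L f B | B. B \<in> S_sets D \<and> A \<subseteq> B} < Gamma D L f A + e"
    unfolding Gamma_def using assms by simp
  from cInf_lessD[OF ne this]
  obtain y where "y \<in> {GammaS D L f B | B. B \<in> S_sets D \<and> A \<subseteq> B}"
      "y < Gamma D L f A + e"
    by blast
  then obtain B where "B \<in> S_sets D" "A \<subseteq> B" "GammaS D L f B < Gamma D L f A + e"
    by blast
  then show ?thesis by blast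
qed

lemma Gamma_nonneg: "0 \<le> Gamma D L f A"
  by (rule Gamma_greatest) (rule GammaS_nonneg)

lemma Gamma_eq_GammaS:
  assumes "B \<in> S_sets D"
  shows "Gamma D L f B = GammaS D L f B"
proof (rule antisym)
  show "Gamma D L f B \<le> GammaS D L f B"
    by (rule Gamma_le_GammaS[OF assms order_refl])
  show "GammaS D L f B \<le> Gamma D L f B"
    by (rule Gamma_greatest, rule GammaS_mono)
qed

lemma Gamma_mono:
  assumes "A \<subseteq> A'"
  shows "Gamma D L f A \<le> Gamma D L f A'"
proof (rule Gamma_greatest)
  fix B assume B: "B \<in> S_sets D" "A' \<subseteq> B"
  then have "A \<subseteq> B" using assms by blast
  then show "Gamma D L f A \<le> GammaS D L f B"
    by (rule Gamma_le_GammaS[OF B(1)])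
qed

lemma Gamma_empty: "Gamma D L f {} = 0"
proof -
  have "GammaS D L f {} \<le> 0"
  proof (rule GammaS_least)
    fix h assume h: "admissible {} h"
    have "h = (\<lambda>x. 0)"
    proof
      fix x
      have "0 \<le> h x" "h x \<le> indicator {} x"
        using h unfolding admissible_def by blast+
      then show "h x = 0" by simp
    qed
    then show "L f f h \<le> 0" using L_zero[OF f_in_D] by simp
  qed
  then show ?thesis
    using Gamma_eq_GammaS[OF S_sets_empty] GammaS_nonneg[of "{}"] by simp
qed

lemma L_le_min_plus_GammaS:
  assumes "h \<in> D" "c \<in> D" "\<And>x. 0 \<le> h x" "\<And>x. h x \<le> 1" "\<And>x. 0 \<le> c x"
  shows "L f f h \<le> L f f (\<lambda>x. min (h x) (c x)) + GammaS D L f {x. c x < h x}"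
proof -
  have "L f f (\<lambda>x. h x - min (h x) (c x)) \<le> GammaS D L f {x. c x < h x}"
    by (rule GammaS_upper[OF admissible_remainder[OF assms]])
  moreover have "L f f (\<lambda>x. h x - min (h x) (c x)) = L f f h - L f f (\<lambda>x. min (h x) (c x))"
    by (rule L_diff[OF f_in_D assms(1) D_min[OF assms(1,2)]])
  ultimately show ?thesis by simp
qed

text \<open>Truncating at a small level t costs little energy, by continuity of L f f.\<close>
lemma L_le_GammaS_superlevel:
  assumes "0 < e"
  shows "\<exists>t>0. \<forall>B h. admissible B h \<longrightarrow> L f f h \<le> GammaS D L f {x. t < h x} + e"
proof -
  obtain K where "0 \<le> K" and K: "\<forall>h\<in>D. \<forall>t. (\<forall>x. \<bar>h x\<bar> \<le> t) \<longrightarrow> L f f h \<le> K * t"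
    using L_bounded[OF f_in_D] by blast
  define t where "t = e / (K + 1)"
  have "0 < t" using assms \<open>0 \<le> K\<close> by (simp add: t_def)
  have "K * t \<le> e"
  proof -
    have "K * t \<le> (K + 1) * t" using \<open>0 < t\<close> by simp
    also have "\<dots> = e" using \<open>0 \<le> K\<close> by (simp add: t_def)
    finally show ?thesis .
  qed
  have "L f f h \<le> GammaS D L f {x. t < h x} + e" if "admissible B h" for B h
  proof -
    have hD: "h \<in> D" and h0: "\<And>x. 0 \<le> h x"
      using that unfolding admissible_def by auto
    have "\<forall>x. \<bar>min (h x) t\<bar> \<le> t"
      using h0 \<open>0 < t\<close> by (simp add: abs_le_iff)
    then have "L f f (\<lambda>x. min (h x) t) \<le> K * t"
      by (rule K[THEN bspec, OF D_min_const[OF hD \<open>0 < t\<close>], THEN spec, THEN mp])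
    moreover have "L f f h \<le> L f f (\<lambda>x. min (h x) t) + GammaS D L f {x. t < h x}"
      using L_le_min_plus_GammaS[OF hD D_min_const[OF hD \<open>0 < t\<close>] h0 admissible_le_1[OF that]]
        h0 \<open>0 < t\<close> by (simp add: min_less_iff_disj)
    ultimately show ?thesis using \<open>K * t \<le> e\<close> by linarith
  qed
  then show ?thesis using \<open>0 < t\<close> by blast
qed

lemma GammaS_Int_plus_Gamma_diff_le:
  assumes U: "U \<in> S_sets D" and B: "B \<in> S_sets D"
  shows "GammaS D L f (U \<inter> B) + Gamma D L f (U - B) \<le> GammaS D L f U"
proof (rule field_le_epsilon)
  fix e :: real assume "0 < e"
  then obtain t where "0 < t"
    and superlevel: "\<And>B h. admissible B h \<Longrightarrow> L f f h \<le> GammaS D L f {x. t < h x} + e/2"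
    using L_le_GammaS_superlevel[of "e/2"] by auto
  obtain h where h: "admissible (U \<inter> B) h" "GammaS D L f (U \<inter> B) - e/2 < L f f h"
    using GammaS_approx[of "e/2" "U \<inter> B"] \<open>0 < e\<close> by auto
  define W where "W = {x. t < h x}"
  obtain V where V: "V \<in> S_sets D" "V \<subseteq> U" "U - B \<subseteq> V" "V \<inter> W = {}"
    using S_sets_separating[OF U h(1) \<open>0 < t\<close>] unfolding W_def by blast
  have "W \<subseteq> U"
  proof
    fix x assume "x \<in> W"
    then have "0 < h x" using \<open>0 < t\<close> by (simp add: W_def)
    then have "x \<in> U \<inter> B" by (rule admissible_support[OF h(1)])
    then show "x \<in> U" by blast
  qed
  have "L f f h \<le> GammaS D L f W + e/2"
    unfolding W_def by (rule superlevel[OF h(1)])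
  moreover have "Gamma D L f (U - B) \<le> GammaS D L f V"
    using Gamma_le_GammaS[OF V(1,3)] .
  moreover have "GammaS D L f V + GammaS D L f W \<le> GammaS D L f U"
  proof -
    have "V \<union> W \<subseteq> U" using V(2) \<open>W \<subseteq> U\<close> by blast
    then show ?thesis
      using GammaS_superadditive[OF V(4)] GammaS_mono[of "V \<union> W" U] by linarith
  qed
  ultimately show "GammaS D L f (U \<inter> B) + Gamma D L f (U - B) \<le> GammaS D L f U + e"
    using h(2) by linarith
qed

lemma Gamma_split_ge:
  assumes B: "B \<in> S_sets D"
  shows "Gamma D L f (E \<inter> B) + Gamma D L f (E - B) \<le> Gamma D L f E"
proof (rule Gamma_greatest)
  fix U assume U: "U \<in> S_sets D" "E \<subseteq> U"
  have "Gamma D L f (E \<inter> B) \<le> GammaS D L f (U \<inter> B)"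
    using Gamma_le_GammaS[OF S_sets_Int[OF U(1) B]] U(2) by blast
  moreover have "Gamma D L f (E - B) \<le> Gamma D L f (U - B)"
    by (rule Gamma_mono) (use U(2) in blast)
  ultimately show "Gamma D L f (E \<inter> B) + Gamma D L f (E - B) \<le> GammaS D L f U"
    using GammaS_Int_plus_Gamma_diff_le[OF U(1) B] by linarith
qed

lemma L_min_le_GammaS_add:
  assumes h: "h \<in> D" "\<And>x. 0 \<le> h x" "\<And>x. h x \<le> 1"
    and g: "g \<in> D" "\<And>x. 0 \<le> g x" and g': "g' \<in> D" "\<And>x. 0 \<le> g' x" and "0 \<le> c"
  shows "L f f (\<lambda>x. min (h x) (c * (g x + g' x)))
    \<le> GammaS D L f {x. 0 < g x} + GammaS D L f {x. 0 < g' x}"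
proof -
  let ?b = "\<lambda>x. min (h x) (c * g x)" and ?b' = "\<lambda>x. min (h x) (c * g' x)"
  have "min (h x) (c * (g x + g' x)) \<le> ?b x + ?b' x" for x
    using h(2)[of x] mult_nonneg_nonneg[OF \<open>0 \<le> c\<close> g(2)[of x]]
      mult_nonneg_nonneg[OF \<open>0 \<le> c\<close> g'(2)[of x]]
    by (simp add: min_def distrib_left)
  then have "L f f (\<lambda>x. min (h x) (c * (g x + g' x))) \<le> L f f (\<lambda>x. ?b x + ?b' x)"
    using h(1) g(1) g'(1) by (intro L_mono[OF f_in_D] D_add D_min D_scale)
  also have "\<dots> = L f f ?b + L f f ?b'"
    using h(1) g(1) g'(1) by (intro L_add[OF f_in_D] D_min D_scale)
  also have "\<dots> \<le> GammaS D L f {x. 0 < g x} + GammaS D L f {x. 0 < g' x}"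
    using GammaS_upper[OF admissible_min[OF h(1) g(1) h(2,3) g(2) \<open>0 \<le> c\<close>]]
      GammaS_upper[OF admissible_min[OF h(1) g'(1) h(2,3) g'(2) \<open>0 \<le> c\<close>]] by simp
  finally show ?thesis .
qed

lemma Gamma_decseq_tendsto_0:
  assumes ed: "energy_dominant D L m"
    and R: "range R \<subseteq> gen_alg D" "decseq R" "(\<Inter>n. R n) = {}"
  shows "(\<lambda>n. Gamma D L f (R n)) \<longlonglongrightarrow> 0"
proof (rule abs_cont_tendsto_0[OF _ R(1)])
  show "abs_cont (gen_alg D) (Gamma D L f) m"
    using ed f_in_D unfolding energy_dominant_def by blast
  have "finite_measure_on (gen_alg D) m"
    using ed unfolding energy_dominant_def by blast
  then show "(\<lambda>n. m (R n)) \<longlonglongrightarrow> 0"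
    by (rule finite_measure_on_decseq_tendsto_0[OF gen_alg_algebra _ R])
qed (rule Gamma_nonneg)

text \<open>An admissible h for U \<union> U' splits into a part below n(g + g'), dominated by
  \<Gamma>(U) + \<Gamma>(U'), and a remainder supported on {n(g + g') < h}; these sets decrease to the
  empty set, so their \<Gamma>(f)-measure vanishes by energy dominance.\<close>
lemma GammaS_subadditive:
  assumes ed: "energy_dominant D L m" and U: "U \<in> S_sets D" and U': "U' \<in> S_sets D"
  shows "GammaS D L f (U \<union> U') \<le> GammaS D L f U + GammaS D L f U'"
proof (rule GammaS_least)
  fix h assume h: "admissible (U \<union> U') h"
  then have hD: "h \<in> D" and h0: "\<And>x. 0 \<le> h x" and h1: "\<And>x. h x \<le> 1"
    using admissible_le_1[OF h] unfolding admissible_def by blast+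
  obtain g where g: "g \<in> D" "\<And>x. 0 \<le> g x" "U = {x. 0 < g x}"
    using S_setsE[OF U] by blast
  obtain g' where g': "g' \<in> D" "\<And>x. 0 \<le> g' x" "U' = {x. 0 < g' x}"
    using S_setsE[OF U'] by blast
  define s where "s = (\<lambda>x. g x + g' x)"
  have sD: "s \<in> D" and s0: "\<And>x. 0 \<le> s x"
    using D_add[OF g(1) g'(1)] g(2) g'(2) by (auto simp: s_def add_nonneg_nonneg)
  define R where "R n = {x. real n * s x < h x}" for n
  have R_S: "R n \<in> S_sets D" for n
    unfolding R_def by (rule S_sets_less[OF D_scale[OF sD] hD])
  have bound: "L f f h - (GammaS D L f U + GammaS D L f U') \<le> Gamma D L f (R n)" for n
  proof -
    have "L f f h \<le> L f f (\<lambda>x. min (h x) (real n * s x)) + GammaS D L f (R n)"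
      unfolding R_def by (rule L_le_min_plus_GammaS[OF hD D_scale[OF sD] h0 h1]) (simp add: s0)
    moreover have "L f f (\<lambda>x. min (h x) (real n * s x)) \<le> GammaS D L f U + GammaS D L f U'"
      using L_min_le_GammaS_add[OF hD h0 h1 g(1,2) g'(1,2), of "real n"] g(3) g'(3)
      by (simp add: s_def)
    ultimately show ?thesis using Gamma_eq_GammaS[OF R_S] by simp
  qed
  have "(\<lambda>n. Gamma D L f (R n)) \<longlonglongrightarrow> 0"
  proof (rule Gamma_decseq_tendsto_0[OF ed])
    show "range R \<subseteq> gen_alg D"
      using R_S S_sets_subset_gen_alg by blast
    show "decseq R"
      unfolding R_def by (rule decseq_superlevel_sets) (rule s0)
    show "(\<Inter>n. R n) = {}"
      unfolding R_def
    proof (rule Inter_superlevel_sets_empty)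
      fix x assume "0 < h x"
      then have "x \<in> U \<union> U'"
        by (rule admissible_support[OF h])
      then show "0 < s x"
        using g(3) g'(3) g(2)[of x] g'(2)[of x] by (auto simp: s_def)
    qed
  qed
  then have "L f f h - (GammaS D L f U + GammaS D L f U') \<le> 0"
    by (rule LIMSEQ_le_const) (use bound in blast)
  then show "L f f h \<le> GammaS D L f U + GammaS D L f U'" by simp
qed

lemma Gamma_split_le:
  assumes ed: "energy_dominant D L m"
  shows "Gamma D L f E \<le> Gamma D L f (E \<inter> B) + Gamma D L f (E - B)"
proof (rule field_le_epsilon)
  fix e :: real assume "0 < e"
  obtain U1 where U1: "U1 \<in> S_sets D" "E \<inter> B \<subseteq> U1"
    "GammaS D L f U1 < Gamma D L f (E \<inter> B) + e/2"
    using Gamma_approx[of "e/2" "E \<inter> B"] \<open>0 < e\<close> by auto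
  obtain U2 where U2: "U2 \<in> S_sets D" "E - B \<subseteq> U2"
    "GammaS D L f U2 < Gamma D L f (E - B) + e/2"
    using Gamma_approx[of "e/2" "E - B"] \<open>0 < e\<close> by auto
  have "Gamma D L f E \<le> GammaS D L f (U1 \<union> U2)"
    by (rule Gamma_le_GammaS[OF S_sets_Un[OF U1(1) U2(1)]]) (use U1(2) U2(2) in blast)
  also have "\<dots> \<le> GammaS D L f U1 + GammaS D L f U2"
    by (rule GammaS_subadditive[OF ed U1(1) U2(1)])
  finally show "Gamma D L f E \<le> Gamma D L f (E \<inter> B) + Gamma D L f (E - B) + e"
    using U1(3) U2(3) by linarith
qed

lemma Gamma_split:
  assumes ed: "energy_dominant D L m" and B: "B \<in> gen_alg D"
  shows "Gamma D L f (E \<inter> B) + Gamma D L f (E - B) = Gamma D L f E"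
proof -
  let ?C = "{B. \<forall>E. Gamma D L f (E \<inter> B) + Gamma D L f (E - B) = Gamma D L f E}"
  have "algebra UNIV ?C"
    by (rule algebra_splitting_sets) (simp_all add: Gamma_empty Gamma_nonneg)
  moreover have "S_sets D \<subseteq> ?C"
  proof
    fix B assume B: "B \<in> S_sets D"
    have "Gamma D L f (E \<inter> B) + Gamma D L f (E - B) = Gamma D L f E" for E
      by (rule antisym[OF Gamma_split_ge[OF B] Gamma_split_le[OF ed]])
    then show "B \<in> ?C" by simp
  qed
  ultimately have "gen_alg D \<subseteq> ?C"
    by (rule gen_alg_minimal)
  then show ?thesis using B by blast
qed

lemma Gamma_countably_additive:
  assumes ed: "energy_dominant D L m"
  shows "countably_additive_real (gen_alg D) (Gamma D L f)"
proof (rule countably_additive_realI[OF gen_alg_algebra])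
  fix A B assume A: "A \<in> gen_alg D" and "A \<inter> B = {}"
  then have "(A \<union> B) \<inter> A = A" "(A \<union> B) - A = B" by auto
  then show "Gamma D L f (A \<union> B) = Gamma D L f A + Gamma D L f B"
    using Gamma_split[OF ed A, of "A \<union> B"] by simp
qed (rule Gamma_decseq_tendsto_0[OF ed])

end

lemma nu_of_energy_dominant:
  assumes sep: "energy_separable_wrt D L fs"
    and ca: "\<And>n. countably_additive_real (gen_alg D) (Gamma D L (fs n))"
  shows "energy_dominant D L (nu_of D L fs)"
proof -
  have fs_D: "fs n \<in> D" for n
    using sep unfolding energy_separable_wrt_def by auto
  define \<mu> where "\<mu> n A = Gamma D L (fs n) A / (1 + Gamma D L (fs n) UNIV)" for n A
  have "finite_measure_on (gen_alg D) (\<lambda>A. \<Sum>n. (1/2) ^ Suc n * \<mu> n A)"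
  proof (rule finite_measure_on_suminf)
    show "countably_additive_real (gen_alg D) (\<mu> n)" for n
      unfolding \<mu>_def by (rule countably_additive_real_divide[OF ca])
    show "0 \<le> \<mu> n A" for n A
      using Gamma_nonneg[OF fs_D, of n A] Gamma_nonneg[OF fs_D, of n UNIV] by (simp add: \<mu>_def)
    show "\<mu> n A \<le> 1" for n A
      using Gamma_mono[OF fs_D subset_UNIV, of n A] Gamma_nonneg[OF fs_D, of n UNIV]
      by (simp add: \<mu>_def)
    show "summable (\<lambda>n. (1/2::real) ^ Suc n)"
      unfolding power_Suc by (rule summable_mult) (rule summable_geometric, simp)
  qed simp
  moreover have "nu_of D L fs = (\<lambda>A. \<Sum>n. (1/2) ^ Suc n * \<mu> n A)"
    unfolding nu_of_def \<mu>_def by simp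
  ultimately show ?thesis
    using sep unfolding energy_dominant_def energy_separable_wrt_def by simp
qed

end

theorem theoremT:
  fixes D :: "('a \<Rightarrow> real) set"
    and L :: "('a \<Rightarrow> real) \<Rightarrow> ('a \<Rightarrow> real) \<Rightarrow> ('a \<Rightarrow> real) \<Rightarrow> real"
    and chi :: "'a \<Rightarrow> real"
  assumes "stone_algebra D"
    and "chi \<in> D" and "\<forall>x. 0 < chi x"
    and "lagrangian D L"
  shows "((\<exists>m. energy_dominant D L m) \<longrightarrow>
            (\<forall>f\<in>D. countably_additive_real (gen_alg D) (Gamma D L f)))
       \<and> (\<forall>fs. energy_separable_wrt D L fs \<and>
               (\<forall>n. countably_additive_real (gen_alg D) (Gamma D L (fs n))) \<longrightarrow>
               energy_dominant D L (nu_of D L fs))"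
proof -
  interpret stone_lagrangian D L chi
    using assms by unfold_locales
  show ?thesis
  proof (intro conjI impI allI ballI)
    fix f assume "\<exists>m. energy_dominant D L m" and "f \<in> D"
    then show "countably_additive_real (gen_alg D) (Gamma D L f)"
      using Gamma_countably_additive by blast
  next
    fix fs
    assume "energy_separable_wrt D L fs \<and> (\<forall>n. countably_additive_real (gen_alg D) (Gamma D L (fs n)))"
    then show "energy_dominant D L (nu_of D L fs)"
      using nu_of_energy_dominant by blast
  qed
qed

end
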